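(* For every word $\omega\in[n]^*$, the set $B^M_\omega:=M_\omega B_\omega\subseteq\mathbb{Z}^n$ is a monotone lattice path from $0$ to $u_\omega$: its elements can be listed as $x_0,x_1,\dots,x_m$ with $x_0=0$, $x_m=u_\omega$, and $x_t-x_{t-1}\in\{e_1,\dots,e_n\}$ for all $t=1,\dots,m$.
   Context: Let $[n]=\{1,\dots,n\}$, $e_1,\dots,e_n$ the standard basis of $\mathbb{Z}^n$; $\varepsilon$ is the empty word, $*$ concatenation. For words $\omega$ over $[n]$ define recursively $a^i_\omega,\delta^i_\omega\in\mathbb{Z}^n$: $a^i_\varepsilon=\delta^i_\varepsilon=e_i$; $a^i_{\omega*j}=a^i_\omega$ if $i\ne j$, $a^j_{\omega*j}=a^j_\omega+\delta^j_\omega$; $\delta^j_{\omega*j}=\delta^j_\omega$, $\delta^i_{\omega*j}=\delta^i_\omega-\delta^j_\omega$ for $i\ne j$. Let $B_\varepsilon=\{0\}$, $B_{\omega*j}=B_\omega+\{0,\delta^j_\omega\}$ (Minkowski sum). Let $M_\omega=(\delta^1_\omega\ \cdots\ \delta^n_\omega)^{-1}$ (inverse of the matrix with columns $\delta^i_\omega$). For $k\in[n]$ let $D^k=\mathrm{id}+e_k(\mathbb{1}-e_k)^T$ with $\mathbb{1}=(1,\dots,1)^T$. Define $u_\varepsilon=0$, $u_{\omega*j}=e_j+D^j u_\omega$. *)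

theory Defs
  imports "HOL-Analysis.Analysis"
begin

text \<open>The alphabet [n] is modelled by a finite type 'n (n = CARD('n)); words are lists,
  and the word omega * j is omega @ [j]. Vectors of Z^n are taken in real^'n.\<close>

definition evec :: "'n::finite \<Rightarrow> real^'n" where
  "evec i = axis i 1"

definition delta_step :: "('n::finite \<Rightarrow> real^'n) \<Rightarrow> 'n \<Rightarrow> ('n \<Rightarrow> real^'n)" where
  "delta_step d j = (\<lambda>i. if i = j then d j else d i - d j)"

definition delta :: "'n::finite list \<Rightarrow> 'n \<Rightarrow> real^'n" where
  "delta w = foldl delta_step evec w"

text \<open>B_rev (rev w) is B_w: B_eps = {0}, B_(w*j) = B_w + {0, delta^j_w}.\<close>
primrec B_rev :: "'n::finite list \<Rightarrow> (real^'n) set" where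
  "B_rev [] = {0}"
| "B_rev (j # r) = {x + y | x y. x \<in> B_rev r \<and> y \<in> {0, delta (rev r) j}}"

definition Bw :: "'n::finite list \<Rightarrow> (real^'n) set" where
  "Bw w = B_rev (rev w)"

definition Mw :: "'n::finite list \<Rightarrow> real^'n^'n" where
  "Mw w = matrix_inv (\<chi> r c. delta w c $ r)"

definition Dmat :: "'n::finite \<Rightarrow> real^'n^'n" where
  "Dmat k = mat 1 + (\<chi> r c. evec k $ r * ((\<chi> i. 1) - evec k) $ c)"

primrec u_rev :: "'n::finite list \<Rightarrow> real^'n" where
  "u_rev [] = 0"
| "u_rev (j # r) = evec j + Dmat j *v u_rev r"

definition uw :: "'n::finite list \<Rightarrow> real^'n" where
  "uw w = u_rev (rev w)"

end

theory Submission
  imports Defs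
begin

text \<open>Let \<open>N\<^sup>k = e\<^sub>k(\<one> - e\<^sub>k)\<^sup>T\<close>, so \<open>D\<^sup>k = I + N\<^sup>k\<close> with inverse \<open>I - N\<^sup>k\<close>.
  The matrix with columns \<open>\<delta>\<^sup>i\<^sub>\<omega>\<close> is multiplied on the right by \<open>I - N\<^sup>j\<close> when \<open>j\<close> is
  appended to \<open>\<omega>\<close>, hence \<open>M\<^sub>\<omega>\<^sub>j = D\<^sup>j M\<^sub>\<omega>\<close>, \<open>M\<^sub>\<omega> \<delta>\<^sup>j\<^sub>\<omega> = e\<^sub>j\<close> and
  \<open>M\<^sub>\<omega>\<^sub>j B\<^sub>\<omega>\<^sub>j = D\<^sup>j P \<union> (D\<^sup>j P + e\<^sub>j)\<close> for \<open>P = M\<^sub>\<omega> B\<^sub>\<omega>\<close>.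
  As \<open>D\<^sup>j\<close> fixes \<open>e\<^sub>j\<close> and sends every other \<open>e\<^sub>i\<close> to \<open>e\<^sub>i + e\<^sub>j\<close>, the image under \<open>D\<^sup>j\<close>
  of a unit-step path through \<open>P\<close> becomes a unit-step path through \<open>D\<^sup>j P \<union> (D\<^sup>j P + e\<^sub>j)\<close>
  once a step \<open>e\<^sub>j\<close> is inserted after every point, except where the path already stepped by
  \<open>e\<^sub>j\<close>. Distinctness is automatic: the coordinate sum grows by one at every unit step.\<close>

definition delta_matrix :: "'n::finite list \<Rightarrow> real^'n^'n" where
  "delta_matrix w = (\<chi> r c. delta w c $ r)"

definition Nmat :: "'n::finite \<Rightarrow> real^'n^'n" where
  "Nmat k = (\<chi> r c. evec k $ r * ((\<chi> i. 1) - evec k) $ c)"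

lemma real_mult_if_one_zero:
  "(x::real) * (if P then 1 else 0) = (if P then x else 0)"
  "(if P then 1 else 0) * (x::real) = (if P then x else 0)"
  "(x::real) * (if P then 0 else 1) = (if P then 0 else x)"
  "(if P then 0 else 1) * (x::real) = (if P then 0 else x)"
  "(1 - (if P then 1 else 0)) = (if P then 0 else (1::real))"
  by simp_all

lemma matrix_inv_eqI:
  fixes A B :: "'a::field^'n^'n"
  assumes "B ** A = mat 1"
  shows "matrix_inv A = B"
proof -
  have B: "A ** B = mat 1 \<and> B ** A = mat 1"
    using assms matrix_left_right_inverse by blast
  have "A ** matrix_inv A = mat 1"
    unfolding matrix_inv_def by (rule someI2[of _ B]) (use B in auto)
  then have "B ** (A ** matrix_inv A) = B" by simp
  then show ?thesis by (simp add: matrix_mul_assoc assms)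
qed

lemma Dmat_mult_inverse: "Dmat k ** (mat 1 - Nmat k) = mat 1"
  unfolding Dmat_def Nmat_def
  by (simp add: vec_eq_iff matrix_matrix_mult_def mat_def evec_def axis_def algebra_simps
      sum.distrib sum_subtractf real_mult_if_one_zero) (auto intro!: sum.neutral)

lemma delta_matrix_Nil: "delta_matrix [] = mat 1"
  by (simp add: delta_matrix_def delta_def vec_eq_iff mat_def evec_def axis_def)

lemma delta_matrix_snoc: "delta_matrix (w @ [j]) = delta_matrix w ** (mat 1 - Nmat j)"
  by (simp add: delta_matrix_def delta_def delta_step_def vec_eq_iff matrix_matrix_mult_def
      Nmat_def mat_def evec_def axis_def algebra_simps sum_subtractf real_mult_if_one_zero)

lemma Dmat_evec_self: "Dmat j *v evec j = evec j"
  by (simp add: Dmat_def vec_eq_iff matrix_vector_mult_def mat_def evec_def axis_def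
      algebra_simps sum.distrib real_mult_if_one_zero)

lemma Dmat_evec_other: "i \<noteq> j \<Longrightarrow> Dmat j *v evec i = evec i + evec j"
  by (simp add: Dmat_def vec_eq_iff matrix_vector_mult_def mat_def evec_def axis_def
      algebra_simps sum.distrib real_mult_if_one_zero)

lemma left_inverse_delta_matrix_snoc:
  assumes "M ** delta_matrix w = mat 1"
  shows "(Dmat j ** M) ** delta_matrix (w @ [j]) = mat 1"
proof -
  have "(Dmat j ** M) ** delta_matrix (w @ [j]) =
      Dmat j ** (M ** delta_matrix w) ** (mat 1 - Nmat j)"
    by (simp add: delta_matrix_snoc matrix_mul_assoc)
  then show ?thesis by (simp add: assms Dmat_mult_inverse)
qed

lemma Mw_eq_matrix_inv: "Mw w = matrix_inv (delta_matrix w)"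
  by (simp add: Mw_def delta_matrix_def)

lemma Mw_mult_delta_matrix: "Mw w ** delta_matrix w = mat 1"
proof (induction w rule: rev_induct)
  case Nil
  then show ?case by (simp add: Mw_eq_matrix_inv delta_matrix_Nil matrix_inv_eqI)
next
  case (snoc j w)
  then have "(Dmat j ** Mw w) ** delta_matrix (w @ [j]) = mat 1"
    by (rule left_inverse_delta_matrix_snoc)
  moreover from this have "Mw (w @ [j]) = Dmat j ** Mw w"
    unfolding Mw_eq_matrix_inv by (rule matrix_inv_eqI)
  ultimately show ?case by simp
qed

lemma Mw_snoc: "Mw (w @ [j]) = Dmat j ** Mw w"
  unfolding Mw_eq_matrix_inv
  by (intro matrix_inv_eqI left_inverse_delta_matrix_snoc
      Mw_mult_delta_matrix[unfolded Mw_eq_matrix_inv])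

lemma Mw_delta: "Mw w *v delta w j = evec j"
proof -
  have "delta w j = delta_matrix w *v evec j"
    by (simp add: delta_matrix_def vec_eq_iff matrix_vector_mult_def evec_def axis_def
        real_mult_if_one_zero)
  then show ?thesis by (simp add: matrix_vector_mul_assoc Mw_mult_delta_matrix)
qed

lemma Bw_snoc: "Bw (w @ [j]) = Bw w \<union> (\<lambda>x. x + delta w j) ` Bw w"
  by (auto simp: Bw_def) (metis add.right_neutral)

lemma image_Mw_Bw_snoc:
  "(\<lambda>x. Mw (w @ [j]) *v x) ` Bw (w @ [j]) =
     (\<lambda>x. Dmat j *v x) ` ((\<lambda>x. Mw w *v x) ` Bw w) \<union>
     (\<lambda>x. Dmat j *v x + evec j) ` ((\<lambda>x. Mw w *v x) ` Bw w)"
proof -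
  have "Mw (w @ [j]) *v (x + delta w j) = Dmat j *v (Mw w *v x) + evec j" for x
    by (simp add: Mw_snoc matrix_vector_right_distrib Mw_delta Dmat_evec_self
        flip: matrix_vector_mul_assoc)
  then show ?thesis
    by (simp add: Bw_snoc image_Un image_image Mw_snoc flip: matrix_vector_mul_assoc)
qed

definition unit_step :: "real^'n::finite \<Rightarrow> real^'n \<Rightarrow> bool" where
  "unit_step a b \<longleftrightarrow> b - a \<in> range evec"

lemma unit_step_coordinate_sum:
  assumes "unit_step a b"
  shows "(\<Sum>i\<in>UNIV. b $ i) = (\<Sum>i\<in>UNIV. a $ i) + 1"
proof -
  obtain k where "b = a + evec k"
    using assms unfolding unit_step_def by (metis diff_add_cancel add.commute rangeE)
  then show ?thesis by (simp add: sum.distrib evec_def axis_def)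
qed

lemma unit_step_path_distinct:
  assumes "successively unit_step xs"
  shows "distinct xs"
proof -
  let ?s = "\<lambda>x :: real^'n. \<Sum>i\<in>UNIV. x $ i"
  have "successively (<) (map ?s xs)"
    unfolding successively_map using assms
    by (rule successively_mono) (simp add: unit_step_coordinate_sum)
  then have "distinct (map ?s xs)"
    by (simp add: successively_conv_sorted_wrt strict_sorted_iff)
  then show ?thesis by (simp add: distinct_map)
qed

fun fill_image_path :: "real^'n^'n \<Rightarrow> real^'n \<Rightarrow> (real^'n::finite) list \<Rightarrow> (real^'n) list" where
  "fill_image_path D e [] = []"
| "fill_image_path D e [x] = [D *v x, D *v x + e]"
| "fill_image_path D e (x # y # r) =
     (if y = x + e then [D *v x] else [D *v x, D *v x + e]) @ fill_image_path D e (y # r)"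

lemma fill_image_path_hd:
  "xs \<noteq> [] \<Longrightarrow> fill_image_path D e xs \<noteq> [] \<and> hd (fill_image_path D e xs) = D *v hd xs"
  by (induction D e xs rule: fill_image_path.induct) auto

lemma fill_image_path_last:
  "xs \<noteq> [] \<Longrightarrow> last (fill_image_path D e xs) = D *v last xs + e"
  by (induction D e xs rule: fill_image_path.induct) (auto simp: fill_image_path_hd)

lemma set_fill_image_path:
  assumes "D *v e = e"
  shows "set (fill_image_path D e xs) = (\<lambda>x. D *v x) ` set xs \<union> (\<lambda>x. D *v x + e) ` set xs"
  using assms
proof (induction D e xs rule: fill_image_path.induct)
  case (3 D e x y r)
  have "y = x + e \<Longrightarrow> D *v x + e = D *v y"
    using "3.prems" by (simp add: matrix_vector_right_distrib)
  then show ?case using 3 by auto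
qed auto

lemma fill_image_path_unit_steps:
  assumes "D *v e = e" and "\<And>i. evec i \<noteq> e \<Longrightarrow> D *v evec i = evec i + e"
    and "e \<in> range evec" and "successively unit_step xs"
  shows "successively unit_step (fill_image_path D e xs)"
  using assms
proof (induction D e xs rule: fill_image_path.induct)
  case (2 D e x)
  then show ?case by (simp add: unit_step_def)
next
  case (3 D e x y r)
  note prems = "3.prems"
  have IH: "successively unit_step (fill_image_path D e (y # r))"
    using 3 by simp
  have hd: "fill_image_path D e (y # r) \<noteq> []" "hd (fill_image_path D e (y # r)) = D *v y"
    using fill_image_path_hd[of "y # r" D e] by auto
  obtain i where i: "y - x = evec i"
    using prems(4) by (auto simp: unit_step_def)
  show ?case
  proof (cases "y = x + e")
    case True
    then have "D *v y - D *v x = e"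
      using prems(1) by (simp add: matrix_vector_right_distrib)
    then show ?thesis
      using True IH hd prems(3)
      by (simp add: successively_append_iff successively_Cons unit_step_def)
  next
    case False
    then have "evec i \<noteq> e"
      using i by (metis add_diff_cancel_left' diff_add_cancel)
    then have "D *v y - (D *v x + e) = evec i"
      using i prems(2) by (simp add: algebra_simps flip: matrix_vector_mult_diff_distrib)
    then show ?thesis
      using False IH hd prems(3)
      by (simp add: successively_append_iff successively_Cons unit_step_def)
  qed
qed auto

lemma image_Mw_Bw_unit_step_path:
  "\<exists>xs. xs \<noteq> [] \<and> successively unit_step xs \<and> set xs = (\<lambda>x. Mw w *v x) ` Bw w \<and>
        hd xs = 0 \<and> last xs = uw w"
proof (induction w rule: rev_induct)
  case Nil
  show ?case by (rule exI[of _ "[0]"]) (simp add: Bw_def uw_def)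
next
  case (snoc j w)
  then obtain xs where xs: "xs \<noteq> []" "successively unit_step xs"
    "set xs = (\<lambda>x. Mw w *v x) ` Bw w" "hd xs = 0" "last xs = uw w"
    by blast
  let ?ys = "fill_image_path (Dmat j) (evec j) xs"
  have "successively unit_step ?ys"
    by (rule fill_image_path_unit_steps[OF Dmat_evec_self _ rangeI xs(2)])
      (metis Dmat_evec_other)
  moreover have "set ?ys = (\<lambda>x. Mw (w @ [j]) *v x) ` Bw (w @ [j])"
    by (simp add: set_fill_image_path Dmat_evec_self image_Mw_Bw_snoc xs(3))
  moreover have "last ?ys = uw (w @ [j])"
    by (simp add: fill_image_path_last xs uw_def add.commute)
  moreover have "?ys \<noteq> []" "hd ?ys = 0"
    using fill_image_path_hd[OF xs(1)] xs(4) by auto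
  ultimately show ?case by blast
qed

theorem lemma3p2:
  fixes w :: "'n::finite list"
  shows "\<exists>xs :: (real^'n) list.
           xs \<noteq> [] \<and> distinct xs \<and>
           set xs = (\<lambda>x. Mw w *v x) ` Bw w \<and>
           hd xs = 0 \<and> last xs = uw w \<and>
           (\<forall>t. 0 < t \<and> t < length xs \<longrightarrow> xs ! t - xs ! (t - 1) \<in> range evec)"
proof -
  obtain xs where xs: "xs \<noteq> []" "successively unit_step xs" "set xs = (\<lambda>x. Mw w *v x) ` Bw w"
    "hd xs = 0" "last xs = uw w"
    using image_Mw_Bw_unit_step_path by blast
  have "xs ! t - xs ! (t - 1) \<in> range evec" if "0 < t" "t < length xs" for t
    using successively_nth[OF xs(2), of "t - 1"] that by (simp add: unit_step_def)
  then show ?thesis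
    using xs unit_step_path_distinct by blast
qed

end
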